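(* Every ternary cubic form $F\in\mathbb{C}[x_0,x_1,x_2]_3$ has an apolar star configuration $\mathbb{X}(4)$.
   Context: Let $S=\mathbb{C}[x_0,x_1,x_2]$ and $T=\mathbb{C}[y_0,y_1,y_2]$, where $T$ acts on $S$ by differentiation, $y_j=\partial/\partial x_j$. For a form $F\in S$, $F^\perp=\{\partial\in T:\partial F=0\}$. A finite set of points $\mathbb{X}\subset\mathbb{P}^2=\mathbb{P}(S_1)$ with defining ideal $I(\mathbb{X})\subseteq T$ is apolar to $F$ if $I(\mathbb{X})\subseteq F^\perp$. A star configuration $\mathbb{X}(4)\subset\mathbb{P}^2$: take $4$ linear forms $l_1,\dots,l_4\in T_1$ such that any $3$ of them are linearly independent; $\mathbb{X}(4)$ is the set of $6$ pairwise intersection points of the lines $\{l_i=0\}$, with ideal $\bigcap_{1\le i<j\le 4}(l_i,l_j)$. *)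

theory Defs
  imports Complex_Main
begin

text \<open>Polynomials in three variables with complex coefficients are represented by
  their coefficient functions on exponent triples (a0,a1,a2), i.e. the coefficient of
  the monomial  z0^a0 z1^a1 z2^a2 , with finite support.  The same representation is
  used for S = C[x0,x1,x2] and for T = C[y0,y1,y2].\<close>

type_synonym expo = "nat \<times> nat \<times> nat"
type_synonym cpoly3 = "expo \<Rightarrow> complex"
type_synonym cvec3 = "complex \<times> complex \<times> complex"

definition deg3 :: "expo \<Rightarrow> nat" where
  "deg3 a = fst a + fst (snd a) + snd (snd a)"

definition supp3 :: "cpoly3 \<Rightarrow> expo set" where
  "supp3 p = {a. p a \<noteq> 0}"

definition is_poly3 :: "cpoly3 \<Rightarrow> bool" where
  "is_poly3 p \<longleftrightarrow> finite (supp3 p)"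

definition is_form3 :: "nat \<Rightarrow> cpoly3 \<Rightarrow> bool" where
  "is_form3 d p \<longleftrightarrow> is_poly3 p \<and> (\<forall>a. p a \<noteq> 0 \<longrightarrow> deg3 a = d)"

definition eadd :: "expo \<Rightarrow> expo \<Rightarrow> expo" where
  "eadd a b = (fst a + fst b, fst (snd a) + fst (snd b), snd (snd a) + snd (snd b))"

definition mon_eval :: "expo \<Rightarrow> cvec3 \<Rightarrow> complex" where
  "mon_eval a v = fst v ^ fst a * fst (snd v) ^ fst (snd a) * snd (snd v) ^ snd (snd a)"

definition eval3 :: "cpoly3 \<Rightarrow> cvec3 \<Rightarrow> complex" where
  "eval3 p v = (\<Sum>a\<in>supp3 p. p a * mon_eval a v)"

text \<open>Differentiation factor:  (d/dx)^b x^(b+c) = ((b+c)!/c!) x^c  (componentwise).\<close>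
definition dfac :: "expo \<Rightarrow> expo \<Rightarrow> complex" where
  "dfac b c =
     of_nat (fact (fst b + fst c)) / of_nat (fact (fst c)) *
     (of_nat (fact (fst (snd b) + fst (snd c))) / of_nat (fact (fst (snd c)))) *
     (of_nat (fact (snd (snd b) + snd (snd c))) / of_nat (fact (snd (snd c))))"

text \<open>Action of D in T on F in S by differentiation, y_j = d/dx_j.
  Coefficient of x^c in D F.\<close>
definition apolar_act :: "cpoly3 \<Rightarrow> cpoly3 \<Rightarrow> cpoly3" where
  "apolar_act D F = (\<lambda>c. \<Sum>b\<in>supp3 D. D b * F (eadd b c) * dfac b c)"

definition perp :: "cpoly3 \<Rightarrow> cpoly3 set" where
  "perp F = {D. is_poly3 D \<and> apolar_act D F = (\<lambda>_. 0)}"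

text \<open>The (homogeneous) defining ideal of a set of points of P^2, each point given by
  a nonzero representative vector: all polynomials vanishing on the affine cone over
  the points (equivalently, whose homogeneous components all vanish at the points).\<close>
definition ideal_of_points :: "cvec3 set \<Rightarrow> cpoly3 set" where
  "ideal_of_points X = {D. is_poly3 D \<and> (\<forall>v\<in>X. \<forall>t::complex. eval3 D (t * fst v, t * fst (snd v), t * snd (snd v)) = 0)}"

definition lin_eval :: "cvec3 \<Rightarrow> cvec3 \<Rightarrow> complex" where
  "lin_eval l v = fst l * fst v + fst (snd l) * fst (snd v) + snd (snd l) * snd (snd v)"

definition lin_indep3 :: "cvec3 \<Rightarrow> cvec3 \<Rightarrow> cvec3 \<Rightarrow> bool" where
  "lin_indep3 u v w \<longleftrightarrow>
     (\<forall>a b c :: complex. (a * fst u + b * fst v + c * fst w = 0 \<and>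
        a * fst (snd u) + b * fst (snd v) + c * fst (snd w) = 0 \<and>
        a * snd (snd u) + b * snd (snd v) + c * snd (snd w) = 0) \<longrightarrow> a = 0 \<and> b = 0 \<and> c = 0)"

definition star_forms4 :: "(nat \<Rightarrow> cvec3) \<Rightarrow> bool" where
  "star_forms4 l \<longleftrightarrow> (\<forall>i j k. i < 4 \<and> j < 4 \<and> k < 4 \<and> i \<noteq> j \<and> i \<noteq> k \<and> j \<noteq> k
        \<longrightarrow> lin_indep3 (l i) (l j) (l k))"

definition star_points4 :: "(nat \<Rightarrow> cvec3) \<Rightarrow> cvec3 set" where
  "star_points4 l = {v. v \<noteq> (0, 0, 0) \<and> (\<exists>i j. i < j \<and> j < 4 \<and> lin_eval (l i) v = 0 \<and> lin_eval (l j) v = 0)}"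

end

theory Submission
  imports Defs "HOL-Computational_Algebra.Fundamental_Theorem_Algebra"
begin

text \<open>Let \<open>T\<close> be the polar tensor of the cubic \<open>F\<close>, so that \<open>T(l, l, l)\<close> is proportional to
  \<open>l\<^sup>3 \<circ> F\<close> for a linear form \<open>l\<close>. We look for a polar quadrilateral: four lines in general
  position such that \<open>T\<close> vanishes on any three of them. At a point \<open>x\<close> of the Hessian curve
  the polar conic \<open>T(x, -, -)\<close> is degenerate, and a vector \<open>w\<close> of its kernel gives two lines
  with \<open>T(x, w, -) = 0\<close>; the two remaining lines are then found by solving quadratic
  equations, with explicit constructions in the degenerate cases (when the kernel is spanned
  by \<open>x\<close>, or when the polar conic of \<open>x\<close> or of \<open>w\<close> is a double line).
  Normalised so that \<open>l\<^sub>3 = l\<^sub>0 + l\<^sub>1 + l\<^sub>2\<close>, the four vanishing conditions cut out the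
  6-dimensional space of symmetric tensors spanned by the cubes of the six vertices
  \<open>l\<^sub>i \<times> l\<^sub>j\<close> of the quadrilateral. So \<open>F\<close> is a linear combination of these cubes, and every form
  vanishing at the vertices annihilates \<open>F\<close>.\<close>

section \<open>Apolarity of sums of cubes\<close>

definition expo_fact :: "expo \<Rightarrow> complex" where
  "expo_fact e = of_nat (fact (fst e)) * of_nat (fact (fst (snd e))) * of_nat (fact (snd (snd e)))"

text \<open>The coefficients of \<open>(p\<^sub>0 x\<^sub>0 + p\<^sub>1 x\<^sub>1 + p\<^sub>2 x\<^sub>2)\<^sup>3\<close>, by the multinomial theorem.\<close>
definition cube_poly :: "cvec3 \<Rightarrow> cpoly3" where
  "cube_poly p = (\<lambda>e. if deg3 e = 3 then 6 / expo_fact e * mon_eval e p else 0)"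

lemma expo_fact_nonzero: "expo_fact e \<noteq> 0"
  by (simp add: expo_fact_def)

lemma mon_eval_eadd: "mon_eval (eadd b c) p = mon_eval b p * mon_eval c p"
  by (simp add: mon_eval_def eadd_def power_add)

lemma mon_eval_scale:
  "mon_eval b (t * fst p, t * fst (snd p), t * snd (snd p)) = t ^ deg3 b * mon_eval b p"
  by (simp add: mon_eval_def deg3_def power_add power_mult_distrib)

lemma deg3_eadd: "deg3 (eadd b c) = deg3 b + deg3 c"
  by (simp add: deg3_def eadd_def)

lemma dfac_eq: "dfac b c = expo_fact (eadd b c) / expo_fact c"
  by (simp add: dfac_def expo_fact_def eadd_def)

lemma cube_poly_dfac:
  "cube_poly p (eadd b c) * dfac b c =
     (if deg3 b + deg3 c = 3 then 6 / expo_fact c * mon_eval b p * mon_eval c p else 0)"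
  using expo_fact_nonzero[of "eadd b c"] expo_fact_nonzero[of c]
  by (simp add: cube_poly_def dfac_eq deg3_eadd mon_eval_eadd field_simps)

text \<open>The homogeneous components of \<open>D\<close> at \<open>p\<close> are the coefficients of the univariate
  polynomial \<open>t \<mapsto> D(t p)\<close>.\<close>
lemma homogeneous_component_vanishes:
  assumes "is_poly3 D" "\<forall>t. eval3 D (t * fst p, t * fst (snd p), t * snd (snd p)) = 0"
  shows "(\<Sum>b\<in>supp3 D. if deg3 b = k then D b * mon_eval b p else 0) = 0"
proof -
  define P where "P = (\<Sum>b\<in>supp3 D. monom (D b * mon_eval b p) (deg3 b))"
  have "poly P t = 0" for t
  proof -
    have "poly P t = (\<Sum>b\<in>supp3 D. D b * mon_eval b p * t ^ deg3 b)"
      by (simp add: P_def poly_sum poly_monom)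
    also have "\<dots> = eval3 D (t * fst p, t * fst (snd p), t * snd (snd p))"
      by (simp add: eval3_def mon_eval_scale mult_ac)
    finally show ?thesis using assms(2) by simp
  qed
  then have "P = 0" using poly_all_0_iff_0 by blast
  then have "coeff P k = 0" by simp
  then show ?thesis by (simp add: P_def coeff_sum)
qed

text \<open>A monomial \<open>y\<^sup>b\<close> maps \<open>p\<^sup>3\<close> to a multiple of \<open>p\<^sup>b (p \<cdot> x)^(3 - |b|)\<close>, so \<open>D\<close> acts on
  \<open>p\<^sup>3\<close> only through the values at \<open>p\<close> of its homogeneous components.\<close>
lemma apolar_act_sum_of_cubes:
  assumes D: "is_poly3 D"
    and vanish: "\<And>i. i < n \<Longrightarrow> \<forall>t. eval3 D (t * fst (p i), t * fst (snd (p i)), t * snd (snd (p i))) = 0"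
    and F: "\<And>e. F e = (\<Sum>i<n. c i * cube_poly (p i) e)"
  shows "apolar_act D F = (\<lambda>_. 0)"
proof
  fix x
  have cube: "(\<Sum>b\<in>supp3 D. D b * (cube_poly (p i) (eadd b x) * dfac b x)) = 0" if "i < n" for i
  proof -
    have "(\<Sum>b\<in>supp3 D. D b * (cube_poly (p i) (eadd b x) * dfac b x))
       = (\<Sum>b\<in>supp3 D. (if deg3 x \<le> 3 then 6 / expo_fact x * mon_eval x (p i) else 0) *
             (if deg3 b = 3 - deg3 x then D b * mon_eval b (p i) else 0))"
      by (rule sum.cong) (auto simp: cube_poly_dfac)
    also have "\<dots> = (if deg3 x \<le> 3 then 6 / expo_fact x * mon_eval x (p i) else 0) *
        (\<Sum>b\<in>supp3 D. if deg3 b = 3 - deg3 x then D b * mon_eval b (p i) else 0)"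
      by (simp add: sum_distrib_left)
    also have "\<dots> = 0" using homogeneous_component_vanishes[OF D vanish[OF that]] by simp
    finally show ?thesis .
  qed
  have "apolar_act D F x = (\<Sum>b\<in>supp3 D. D b * (\<Sum>i<n. c i * cube_poly (p i) (eadd b x)) * dfac b x)"
    by (simp add: apolar_act_def F)
  also have "\<dots> = (\<Sum>i<n. c i * (\<Sum>b\<in>supp3 D. D b * (cube_poly (p i) (eadd b x) * dfac b x)))"
    by (simp add: sum_distrib_left sum_distrib_right mult_ac sum.swap[where A="supp3 D"])
  also have "\<dots> = 0" using cube by simp
  finally show "apolar_act D F x = 0" .
qed

lemma ideal_of_points_subset_perp:
  assumes points: "\<And>q. q < n \<Longrightarrow> p q \<in> X"
    and F: "\<And>e. F e = (\<Sum>q<n. c q * cube_poly (p q) e)"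
  shows "ideal_of_points X \<subseteq> perp F"
proof
  fix D assume "D \<in> ideal_of_points X"
  then have D: "is_poly3 D" "\<forall>v\<in>X. \<forall>t. eval3 D (t * fst v, t * fst (snd v), t * snd (snd v)) = 0"
    unfolding ideal_of_points_def by auto
  have "apolar_act D F = (\<lambda>_. 0)"
    by (rule apolar_act_sum_of_cubes[OF D(1) _ F]) (use D(2) points in auto)
  with D(1) show "D \<in> perp F" by (simp add: perp_def)
qed

section \<open>Symmetric trilinear forms\<close>

type_synonym tensor3 = "nat \<Rightarrow> nat \<Rightarrow> nat \<Rightarrow> complex"

definition coord :: "cvec3 \<Rightarrow> nat \<Rightarrow> complex" where
  "coord v i = (if i = 0 then fst v else if i = 1 then fst (snd v) else snd (snd v))"

definition trilinear :: "tensor3 \<Rightarrow> cvec3 \<Rightarrow> cvec3 \<Rightarrow> cvec3 \<Rightarrow> complex" where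
  "trilinear T u v w = (\<Sum>i<3. \<Sum>j<3. \<Sum>k<3. T i j k * coord u i * coord v j * coord w k)"

definition symmetric3 :: "tensor3 \<Rightarrow> bool" where
  "symmetric3 T \<longleftrightarrow> (\<forall>i j k. T i j k = T j i k \<and> T i j k = T i k j)"

definition det3 :: "cvec3 \<Rightarrow> cvec3 \<Rightarrow> cvec3 \<Rightarrow> complex" where
  "det3 u v w = fst u * (fst (snd v) * snd (snd w) - snd (snd v) * fst (snd w))
              - fst (snd u) * (fst v * snd (snd w) - snd (snd v) * fst w)
              + snd (snd u) * (fst v * fst (snd w) - fst (snd v) * fst w)"

definition cross :: "cvec3 \<Rightarrow> cvec3 \<Rightarrow> cvec3" where
  "cross u v = (fst (snd u) * snd (snd v) - snd (snd u) * fst (snd v),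
                snd (snd u) * fst v - fst u * snd (snd v),
                fst u * fst (snd v) - fst (snd u) * fst v)"

definition lincomb3 :: "complex \<Rightarrow> cvec3 \<Rightarrow> complex \<Rightarrow> cvec3 \<Rightarrow> complex \<Rightarrow> cvec3 \<Rightarrow> cvec3" where
  "lincomb3 a x b y c z = (a * fst x + b * fst y + c * fst z,
                           a * fst (snd x) + b * fst (snd y) + c * fst (snd z),
                           a * snd (snd x) + b * snd (snd y) + c * snd (snd z))"

definition basis_vec :: "cvec3 \<Rightarrow> cvec3 \<Rightarrow> cvec3 \<Rightarrow> nat \<Rightarrow> cvec3" where
  "basis_vec m0 m1 m2 i = (if i = 0 then m0 else if i = 1 then m1 else m2)"

definition basis_comb :: "cvec3 \<Rightarrow> cvec3 \<Rightarrow> cvec3 \<Rightarrow> cvec3 \<Rightarrow> cvec3" where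
  "basis_comb m0 m1 m2 g = lincomb3 (fst g) m0 (fst (snd g)) m1 (snd (snd g)) m2"

definition pull_tensor :: "tensor3 \<Rightarrow> cvec3 \<Rightarrow> cvec3 \<Rightarrow> cvec3 \<Rightarrow> tensor3" where
  "pull_tensor T m0 m1 m2 i j k =
     trilinear T (basis_vec m0 m1 m2 i) (basis_vec m0 m1 m2 j) (basis_vec m0 m1 m2 k)"

abbreviation unit3 :: "nat \<Rightarrow> cvec3" where
  "unit3 \<equiv> basis_vec (1,0,0) (0,1,0) (0,0,1)"

lemma sum_lessThan_3: "(\<Sum>i<(3::nat). f i) = f 0 + f 1 + (f 2 :: 'a :: comm_monoid_add)"
  by (simp add: numeral_3_eq_3 lessThan_Suc add_ac numeral_2_eq_2)

lemma trilinear_expand: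
  "trilinear T (a0,a1,a2) (b0,b1,b2) (c0,c1,c2) = T 0 0 0 * a0 * b0 * c0 + T 0 0 1 * a0 * b0 * c1 + T 0 0 2 * a0 * b0 * c2 + T 0 1 0 * a0 * b1 * c0 + T 0 1 1 * a0 * b1 * c1 + T 0 1 2 * a0 * b1 * c2 + T 0 2 0 * a0 * b2 * c0 + T 0 2 1 * a0 * b2 * c1 + T 0 2 2 * a0 * b2 * c2 + T 1 0 0 * a1 * b0 * c0 + T 1 0 1 * a1 * b0 * c1 + T 1 0 2 * a1 * b0 * c2 + T 1 1 0 * a1 * b1 * c0 + T 1 1 1 * a1 * b1 * c1 + T 1 1 2 * a1 * b1 * c2 + T 1 2 0 * a1 * b2 * c0 + T 1 2 1 * a1 * b2 * c1 + T 1 2 2 * a1 * b2 * c2 + T 2 0 0 * a2 * b0 * c0 + T 2 0 1 * a2 * b0 * c1 + T 2 0 2 * a2 * b0 * c2 + T 2 1 0 * a2 * b1 * c0 + T 2 1 1 * a2 * b1 * c1 + T 2 1 2 * a2 * b1 * c2 + T 2 2 0 * a2 * b2 * c0 + T 2 2 1 * a2 * b2 * c1 + T 2 2 2 * a2 * b2 * c2"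
  by (simp add: trilinear_def sum_lessThan_3 coord_def add_ac)

lemma symmetric3_eqs:
  assumes "symmetric3 T"
  shows "T 0 1 0 = T 0 0 1" "T 0 2 0 = T 0 0 2" "T 0 2 1 = T 0 1 2" "T 1 0 0 = T 0 0 1"
    "T 1 0 1 = T 0 1 1" "T 1 0 2 = T 0 1 2" "T 1 1 0 = T 0 1 1" "T 1 2 0 = T 0 1 2"
    "T 1 2 1 = T 1 1 2" "T 2 0 0 = T 0 0 2" "T 2 0 1 = T 0 1 2" "T 2 0 2 = T 0 2 2"
    "T 2 1 0 = T 0 1 2" "T 2 1 1 = T 1 1 2" "T 2 1 2 = T 1 2 2" "T 2 2 0 = T 0 2 2"
    "T 2 2 1 = T 1 2 2"
  using assms unfolding symmetric3_def by metis+

lemma trilinear_symmetric_expand: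
  assumes "symmetric3 T"
  shows "trilinear T (a0,a1,a2) (b0,b1,b2) (c0,c1,c2) =
    T 0 0 0 * (a0 * b0 * c0) + T 0 0 1 * (a0 * b0 * c1 + a0 * b1 * c0 + a1 * b0 * c0)
    + T 0 0 2 * (a0 * b0 * c2 + a0 * b2 * c0 + a2 * b0 * c0)
    + T 0 1 1 * (a0 * b1 * c1 + a1 * b0 * c1 + a1 * b1 * c0)
    + T 0 1 2 * (a0 * b1 * c2 + a0 * b2 * c1 + a1 * b0 * c2 + a1 * b2 * c0 + a2 * b0 * c1 + a2 * b1 * c0)
    + T 0 2 2 * (a0 * b2 * c2 + a2 * b0 * c2 + a2 * b2 * c0) + T 1 1 1 * (a1 * b1 * c1)
    + T 1 1 2 * (a1 * b1 * c2 + a1 * b2 * c1 + a2 * b1 * c1)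
    + T 1 2 2 * (a1 * b2 * c2 + a2 * b1 * c2 + a2 * b2 * c1) + T 2 2 2 * (a2 * b2 * c2)"
  unfolding trilinear_expand symmetric3_eqs[OF assms] by (simp add: algebra_simps)

lemma trilinear_lincomb1:
  "trilinear T (lincomb3 a x b y c z) v w = a * trilinear T x v w + b * trilinear T y v w + c * trilinear T z v w"
  by (cases x, cases y, cases z, cases v, cases w) (simp add: trilinear_expand lincomb3_def algebra_simps)

lemma trilinear_lincomb2:
  "trilinear T u (lincomb3 a x b y c z) w = a * trilinear T u x w + b * trilinear T u y w + c * trilinear T u z w"
  by (cases x, cases y, cases z, cases u, cases w) (simp add: trilinear_expand lincomb3_def algebra_simps)

lemma trilinear_lincomb3:
  "trilinear T u v (lincomb3 a x b y c z) = a * trilinear T u v x + b * trilinear T u v y + c * trilinear T u v z"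
  by (cases x, cases y, cases z, cases u, cases v) (simp add: trilinear_expand lincomb3_def algebra_simps)

lemma trilinear_swap12: "symmetric3 T \<Longrightarrow> trilinear T u v w = trilinear T v u w"
  by (cases u, cases v, cases w) (simp add: trilinear_symmetric_expand algebra_simps)

lemma trilinear_swap23: "symmetric3 T \<Longrightarrow> trilinear T u v w = trilinear T u w v"
  by (cases u, cases v, cases w) (simp add: trilinear_symmetric_expand algebra_simps)

lemma trilinear_pull_tensor:
  "trilinear (pull_tensor T m0 m1 m2) g d e =
     trilinear T (basis_comb m0 m1 m2 g) (basis_comb m0 m1 m2 d) (basis_comb m0 m1 m2 e)"
  by (cases g, cases d, cases e)
     (simp add: trilinear_expand[of "pull_tensor T m0 m1 m2"] basis_comb_def trilinear_lincomb1
        trilinear_lincomb2 trilinear_lincomb3 pull_tensor_def basis_vec_def algebra_simps)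

lemma symmetric3_pull_tensor:
  assumes "symmetric3 T"
  shows "symmetric3 (pull_tensor T m0 m1 m2)"
  unfolding symmetric3_def pull_tensor_def
  using trilinear_swap12[OF assms] trilinear_swap23[OF assms] by blast

lemma det3_basis_comb:
  "det3 (basis_comb m0 m1 m2 g) (basis_comb m0 m1 m2 d) (basis_comb m0 m1 m2 e) = det3 m0 m1 m2 * det3 g d e"
  by (cases g, cases d, cases e, cases m0, cases m1, cases m2)
     (simp add: det3_def basis_comb_def lincomb3_def algebra_simps)

lemma det3_swap12: "det3 u v w = - det3 v u w"
  by (simp add: det3_def algebra_simps)

lemma det3_swap23: "det3 u v w = - det3 u w v"
  by (simp add: det3_def algebra_simps)

lemma det3_transpose:
  "det3 (a0,a1,a2) (b0,b1,b2) (c0,c1,c2) = det3 (a0,b0,c0) (a1,b1,c1) (a2,b2,c2)"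
  by (simp add: det3_def algebra_simps)

lemma cramer3:
  assumes "det3 m0 m1 m2 \<noteq> 0"
  shows "v = lincomb3 (det3 v m1 m2 / det3 m0 m1 m2) m0 (det3 m0 v m2 / det3 m0 m1 m2) m1
                      (det3 m0 m1 v / det3 m0 m1 m2) m2"
proof -
  have "det3 m0 m1 m2 * fst v = det3 v m1 m2 * fst m0 + det3 m0 v m2 * fst m1 + det3 m0 m1 v * fst m2"
    "det3 m0 m1 m2 * fst (snd v) = det3 v m1 m2 * fst (snd m0) + det3 m0 v m2 * fst (snd m1) + det3 m0 m1 v * fst (snd m2)"
    "det3 m0 m1 m2 * snd (snd v) = det3 v m1 m2 * snd (snd m0) + det3 m0 v m2 * snd (snd m1) + det3 m0 m1 v * snd (snd m2)"
    unfolding det3_def by algebra+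
  with assms show ?thesis
    by (cases v) (simp add: lincomb3_def field_simps)
qed

lemma trilinear_unit3:
  assumes "i < 3" "j < 3" "k < 3"
  shows "trilinear T (unit3 i) (unit3 j) (unit3 k) = T i j k"
proof -
  have "i = 0 \<or> i = 1 \<or> i = 2" "j = 0 \<or> j = 1 \<or> j = 2" "k = 0 \<or> k = 1 \<or> k = 2"
    using assms by auto
  then show ?thesis by (auto simp: basis_vec_def trilinear_expand)
qed

lemma tensor_eq_if_pull_tensor_eq:
  assumes "det3 m0 m1 m2 \<noteq> 0"
    and "\<And>a b c. a < 3 \<Longrightarrow> b < 3 \<Longrightarrow> c < 3 \<Longrightarrow> pull_tensor T m0 m1 m2 a b c = pull_tensor T' m0 m1 m2 a b c"
    and "i < 3" "j < 3" "k < 3"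
  shows "T i j k = T' i j k"
proof -
  have comb: "\<exists>g. unit3 n = basis_comb m0 m1 m2 g" for n
    using cramer3[OF assms(1), of "unit3 n"] by (metis basis_comb_def fst_conv snd_conv)
  obtain gi gj gk where
    "unit3 i = basis_comb m0 m1 m2 gi" "unit3 j = basis_comb m0 m1 m2 gj" "unit3 k = basis_comb m0 m1 m2 gk"
    using comb by metis
  then have "T i j k = trilinear (pull_tensor T m0 m1 m2) gi gj gk"
    and "T' i j k = trilinear (pull_tensor T' m0 m1 m2) gi gj gk"
    using trilinear_unit3 assms(3-5) by (metis trilinear_pull_tensor)+
  moreover have "trilinear (pull_tensor T m0 m1 m2) gi gj gk = trilinear (pull_tensor T' m0 m1 m2) gi gj gk"
    unfolding trilinear_def using assms(2) by (intro sum.cong) auto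
  ultimately show ?thesis by simp
qed

lemma lin_eval_sum: "lin_eval p u = (\<Sum>i<3. coord p i * coord u i)"
  by (simp add: lin_eval_def sum_lessThan_3 coord_def)

lemma trilinear_sum_rank_one:
  "trilinear (\<lambda>i j k. \<Sum>q<n. c q * coord (p q) i * coord (p q) j * coord (p q) k) u v w =
     (\<Sum>q<n. c q * lin_eval (p q) u * lin_eval (p q) v * lin_eval (p q) w)"
  by (simp add: trilinear_def lin_eval_sum sum_distrib_left sum_distrib_right mult_ac
      sum.swap[where A="{..<n}"])

lemma lin_eval_cross: "lin_eval (cross u v) w = det3 u v w"
  by (simp add: lin_eval_def cross_def det3_def algebra_simps)

lemma lin_eval_cross_left: "lin_eval u (cross u v) = 0"
  by (simp add: lin_eval_def cross_def algebra_simps)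

lemma lin_eval_cross_right: "lin_eval v (cross u v) = 0"
  by (simp add: lin_eval_def cross_def algebra_simps)

lemma lin_indep3_if_det3: "det3 u v w \<noteq> 0 \<Longrightarrow> lin_indep3 u v w"
  unfolding lin_indep3_def
proof (intro allI impI)
  fix a b c :: complex
  assume "det3 u v w \<noteq> 0" and "a * fst u + b * fst v + c * fst w = 0 \<and>
        a * fst (snd u) + b * fst (snd v) + c * fst (snd w) = 0 \<and>
        a * snd (snd u) + b * snd (snd v) + c * snd (snd w) = 0"
  then have "a * det3 u v w = 0" "b * det3 u v w = 0" "c * det3 u v w = 0"
    unfolding det3_def by algebra+
  with \<open>det3 u v w \<noteq> 0\<close> show "a = 0 \<and> b = 0 \<and> c = 0" by simp
qed

definition unit_expo :: "nat \<Rightarrow> expo" where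
  "unit_expo i = (if i = 0 then (1,0,0) else if i = 1 then (0,1,0) else (0,0,1))"

definition expo3 :: "nat \<Rightarrow> nat \<Rightarrow> nat \<Rightarrow> expo" where
  "expo3 i j k = eadd (unit_expo i) (eadd (unit_expo j) (unit_expo k))"

text \<open>\<open>T\<^sub>i\<^sub>j\<^sub>k = \<partial>\<^sub>i \<partial>\<^sub>j \<partial>\<^sub>k F / 6\<close>, so that \<open>F = \<Sum> T\<^sub>i\<^sub>j\<^sub>k x\<^sub>i x\<^sub>j x\<^sub>k\<close> for a cubic form \<open>F\<close>.\<close>
definition polar_tensor :: "cpoly3 \<Rightarrow> tensor3" where
  "polar_tensor F i j k = F (expo3 i j k) * expo_fact (expo3 i j k) / 6"

lemma symmetric3_polar_tensor: "symmetric3 (polar_tensor F)"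
proof -
  have "expo3 i j k = expo3 j i k \<and> expo3 i j k = expo3 i k j" for i j k
    by (simp add: expo3_def eadd_def add_ac)
  then show ?thesis unfolding symmetric3_def polar_tensor_def by metis
qed

lemma mon_eval_expo3: "mon_eval (expo3 i j k) p = coord p i * coord p j * coord p k"
proof -
  have "mon_eval (unit_expo n) p = coord p n" for n
    by (simp add: unit_expo_def mon_eval_def coord_def)
  then show ?thesis by (simp add: expo3_def mon_eval_eadd)
qed

lemma deg3_eq_3_expo3:
  assumes "deg3 e = 3"
  shows "\<exists>i<3. \<exists>j<3. \<exists>k<3. e = expo3 i j k"
proof -
  obtain a b c where e: "e = (a,b,c)" by (cases e)
  with assms have "a + b + c = 3" by (simp add: deg3_def)
  then have "(a=0 \<and> b=0 \<and> c=3) \<or> (a=0 \<and> b=1 \<and> c=2) \<or> (a=0 \<and> b=2 \<and> c=1) \<or> (a=0 \<and> b=3 \<and> c=0)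
      \<or> (a=1 \<and> b=0 \<and> c=2) \<or> (a=1 \<and> b=1 \<and> c=1) \<or> (a=1 \<and> b=2 \<and> c=0) \<or> (a=2 \<and> b=0 \<and> c=1)
      \<or> (a=2 \<and> b=1 \<and> c=0) \<or> (a=3 \<and> b=0 \<and> c=0)"
    by presburger
  moreover define i :: nat where "i = (if a > 0 then 0 else if b > 0 then 1 else 2)"
  moreover define j :: nat where "j = (if a > 1 then 0 else if a + b > 1 then 1 else 2)"
  moreover define k :: nat where "k = (if a > 2 then 0 else if a + b > 2 then 1 else 2)"
  ultimately have "e = expo3 i j k"
    unfolding e by (elim disjE) (simp_all add: expo3_def eadd_def unit_expo_def)
  moreover have "i < 3" "j < 3" "k < 3" by (simp_all add: i_def j_def k_def)
  ultimately show ?thesis by blast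
qed

lemma cubic_form_eq_sum_of_cubes:
  assumes F: "is_form3 3 F"
    and T: "\<And>i j k. i < 3 \<Longrightarrow> j < 3 \<Longrightarrow> k < 3 \<Longrightarrow>
      polar_tensor F i j k = (\<Sum>q<n. c q * coord (p q) i * coord (p q) j * coord (p q) k)"
  shows "F e = (\<Sum>q<n. c q * cube_poly (p q) e)"
proof (cases "deg3 e = 3")
  case True
  then obtain i j k where ijk: "i < 3" "j < 3" "k < 3" "e = expo3 i j k"
    using deg3_eq_3_expo3 by blast
  have "F e = 6 / expo_fact e * polar_tensor F i j k"
    using expo_fact_nonzero[of e] ijk(4) by (simp add: polar_tensor_def)
  also have "\<dots> = (\<Sum>q<n. c q * cube_poly (p q) e)"
    using True unfolding T[OF ijk(1-3)] ijk(4)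
    by (simp add: cube_poly_def sum_distrib_left mon_eval_expo3 mult_ac)
  finally show ?thesis .
next
  case False
  then have "F e = 0" using F unfolding is_form3_def by blast
  then show ?thesis using False by (simp add: cube_poly_def)
qed

section \<open>Polar quadrilaterals\<close>

text \<open>For the polar tensor of \<open>F\<close>, these will be the four lines of the apolar star
  configuration.\<close>
definition polar_quadrilateral :: "tensor3 \<Rightarrow> cvec3 \<Rightarrow> cvec3 \<Rightarrow> cvec3 \<Rightarrow> cvec3 \<Rightarrow> bool" where
  "polar_quadrilateral T l0 l1 l2 l3 \<longleftrightarrow>
     det3 l0 l1 l2 \<noteq> 0 \<and> det3 l0 l1 l3 \<noteq> 0 \<and> det3 l0 l2 l3 \<noteq> 0 \<and> det3 l1 l2 l3 \<noteq> 0 \<and>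
     trilinear T l0 l1 l2 = 0 \<and> trilinear T l0 l1 l3 = 0 \<and> trilinear T l0 l2 l3 = 0 \<and>
     trilinear T l1 l2 l3 = 0"

abbreviation has_polar_quadrilateral :: "tensor3 \<Rightarrow> bool" where
  "has_polar_quadrilateral T \<equiv> \<exists>l0 l1 l2 l3. polar_quadrilateral T l0 l1 l2 l3"

lemma has_polar_quadrilateral_pull_tensor:
  assumes "det3 m0 m1 m2 \<noteq> 0" "has_polar_quadrilateral (pull_tensor T m0 m1 m2)"
  shows "has_polar_quadrilateral T"
proof -
  obtain l0 l1 l2 l3 where "polar_quadrilateral (pull_tensor T m0 m1 m2) l0 l1 l2 l3"
    using assms(2) by blast
  then have "polar_quadrilateral T (basis_comb m0 m1 m2 l0) (basis_comb m0 m1 m2 l1)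
      (basis_comb m0 m1 m2 l2) (basis_comb m0 m1 m2 l3)"
    using assms(1) by (simp add: polar_quadrilateral_def det3_basis_comb trilinear_pull_tensor)
  then show ?thesis by blast
qed

lemma polar_quadrilateral_normalize:
  assumes quad: "polar_quadrilateral T l0 l1 l2 l3"
  shows "\<exists>L0 L1 L2. polar_quadrilateral T L0 L1 L2 (lincomb3 1 L0 1 L1 1 L2)"
proof -
  define D where "D = det3 l0 l1 l2"
  define a0 where "a0 = det3 l3 l1 l2 / D"
  define a1 where "a1 = det3 l0 l3 l2 / D"
  define a2 where "a2 = det3 l0 l1 l3 / D"
  define L0 where "L0 = lincomb3 a0 l0 0 l0 0 l0"
  define L1 where "L1 = lincomb3 a1 l1 0 l1 0 l1"
  define L2 where "L2 = lincomb3 a2 l2 0 l2 0 l2"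
  have "D \<noteq> 0" using quad by (simp add: polar_quadrilateral_def D_def)
  then have l3: "lincomb3 1 L0 1 L1 1 L2 = l3"
    using cramer3[of l0 l1 l2 l3] by (simp add: L0_def L1_def L2_def lincomb3_def a0_def a1_def a2_def D_def)
  have "det3 l3 l1 l2 = det3 l1 l2 l3" "det3 l0 l3 l2 = - det3 l0 l2 l3"
    by (metis det3_swap12 det3_swap23 minus_minus)+
  then have "det3 l3 l1 l2 \<noteq> 0" "det3 l0 l3 l2 \<noteq> 0"
    using quad by (simp_all add: polar_quadrilateral_def)
  with quad \<open>D \<noteq> 0\<close> have "a0 \<noteq> 0" "a1 \<noteq> 0" "a2 \<noteq> 0"
    by (simp_all add: a0_def a1_def a2_def polar_quadrilateral_def)
  moreover have "det3 L0 L1 L2 = a0 * a1 * a2 * det3 l0 l1 l2" "det3 L0 L1 l3 = a0 * a1 * det3 l0 l1 l3"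
    "det3 L0 L2 l3 = a0 * a2 * det3 l0 l2 l3" "det3 L1 L2 l3 = a1 * a2 * det3 l1 l2 l3"
    by (simp_all add: L0_def L1_def L2_def det3_def lincomb3_def algebra_simps)
  moreover have "trilinear T L0 L1 L2 = a0 * a1 * a2 * trilinear T l0 l1 l2"
    "trilinear T L0 L1 l3 = a0 * a1 * trilinear T l0 l1 l3"
    "trilinear T L0 L2 l3 = a0 * a2 * trilinear T l0 l2 l3"
    "trilinear T L1 L2 l3 = a1 * a2 * trilinear T l1 l2 l3"
    by (simp_all add: L0_def L1_def L2_def trilinear_lincomb1 trilinear_lincomb2 trilinear_lincomb3)
  ultimately have "polar_quadrilateral T L0 L1 L2 l3"
    using quad by (simp add: polar_quadrilateral_def)
  then show ?thesis using l3 by metis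
qed

lemma quadratic_side_choice:
  fixes A0 A2 A22 :: complex
  assumes "\<not> (A0 = 0 \<and> A2 = 0 \<and> A22 \<noteq> 0)"
  shows "\<exists>\<alpha> a. a \<noteq> 0 \<and> a * (A2 + \<alpha> * A0) + (A22 + 2 * \<alpha> * A2 + \<alpha>\<^sup>2 * A0) = 0"
proof (cases "A0 = 0")
  case False
  then have "[:A2, A0:] * [:A22, 2 * A2, A0:] \<noteq> 0" by simp
  then obtain x where "poly ([:A2, A0:] * [:A22, 2 * A2, A0:]) x \<noteq> 0"
    using poly_all_0_iff_0 by blast
  then have "poly [:A2, A0:] x \<noteq> 0" "poly [:A22, 2 * A2, A0:] x \<noteq> 0"
    unfolding poly_mult by auto
  then have lin: "A2 + x * A0 \<noteq> 0" and quad: "A22 + 2 * x * A2 + x\<^sup>2 * A0 \<noteq> 0"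
    by (simp_all add: algebra_simps power2_eq_square)
  show ?thesis
  proof (intro exI conjI)
    show "- (A22 + 2 * x * A2 + x\<^sup>2 * A0) / (A2 + x * A0) \<noteq> 0"
      using lin quad by (simp only: divide_eq_0_iff neg_equal_0_iff_equal) simp
    show "- (A22 + 2 * x * A2 + x\<^sup>2 * A0) / (A2 + x * A0) * (A2 + x * A0)
        + (A22 + 2 * x * A2 + x\<^sup>2 * A0) = 0"
      using lin by simp
  qed
next
  case True
  show ?thesis
  proof (cases "A2 = 0")
    case False
    with True show ?thesis
      by (intro exI[of _ "(1 - A22) / (2 * A2)"] exI[of _ "- 1 / A2"]) (simp add: field_simps)
  next
    case A2: True
    with assms True have "A22 = 0" by simp
    with True A2 show ?thesis by (intro exI[of _ 0] exI[of _ 1]) simp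
  qed
qed

text \<open>Once \<open>T(e\<^sub>0, e\<^sub>1, -) = 0\<close>, the conditions on the two remaining lines
  \<open>(\<alpha>, \<beta>, 1)\<close> and \<open>(\<alpha> + a, \<beta> + b, 1)\<close> decouple into one quadratic condition on \<open>(\<alpha>, a)\<close>
  and one on \<open>(\<beta>, b)\<close>.\<close>
lemma has_polar_quadrilateral_conjugate_generic:
  assumes sym: "symmetric3 T" and conj: "T 0 0 1 = 0" "T 0 1 1 = 0" "T 0 1 2 = 0"
    and nondeg0: "\<not> (T 0 0 0 = 0 \<and> T 0 0 2 = 0 \<and> T 0 2 2 \<noteq> 0)"
    and nondeg1: "\<not> (T 1 1 1 = 0 \<and> T 1 1 2 = 0 \<and> T 1 2 2 \<noteq> 0)"
  shows "has_polar_quadrilateral T"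
proof -
  obtain \<alpha> a where a: "a \<noteq> 0"
    "a * (T 0 0 2 + \<alpha> * T 0 0 0) + (T 0 2 2 + 2 * \<alpha> * T 0 0 2 + \<alpha>\<^sup>2 * T 0 0 0) = 0"
    using quadratic_side_choice[OF nondeg0] by blast
  obtain \<beta> b where b: "b \<noteq> 0"
    "b * (T 1 1 2 + \<beta> * T 1 1 1) + (T 1 2 2 + 2 * \<beta> * T 1 1 2 + \<beta>\<^sup>2 * T 1 1 1) = 0"
    using quadratic_side_choice[OF nondeg1] by blast
  have "trilinear T (1,0,0) (\<alpha>,\<beta>,1) (a+\<alpha>,b+\<beta>,1)
      = a * (T 0 0 2 + \<alpha> * T 0 0 0) + (T 0 2 2 + 2 * \<alpha> * T 0 0 2 + \<alpha>\<^sup>2 * T 0 0 0)"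
   and "trilinear T (0,1,0) (\<alpha>,\<beta>,1) (a+\<alpha>,b+\<beta>,1)
      = b * (T 1 1 2 + \<beta> * T 1 1 1) + (T 1 2 2 + 2 * \<beta> * T 1 1 2 + \<beta>\<^sup>2 * T 1 1 1)"
    using conj by (simp_all add: trilinear_symmetric_expand[OF sym] algebra_simps power2_eq_square)
  with a b conj have "polar_quadrilateral T (1,0,0) (0,1,0) (\<alpha>,\<beta>,1) (a+\<alpha>, b+\<beta>, 1)"
    by (simp add: polar_quadrilateral_def det3_def trilinear_symmetric_expand[OF sym])
  then show ?thesis by blast
qed

text \<open>For symmetric \<open>T\<close>, \<open>binary_polar T a b c = T((0,a,1), (0,b,1), (0,c,1))\<close>.\<close>
definition binary_polar :: "tensor3 \<Rightarrow> complex \<Rightarrow> complex \<Rightarrow> complex \<Rightarrow> complex" where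
  "binary_polar T x y z = T 1 1 1 * x * y * z + T 1 1 2 * (x * y + x * z + y * z)
     + T 1 2 2 * (x + y + z) + T 2 2 2"

lemma trilinear_rank_one_affine:
  assumes sym: "symmetric3 T" and rank_one: "T 0 0 0 = 0" "T 0 0 1 = 0" "T 0 0 2 = 0" "T 0 1 1 = 0" "T 0 1 2 = 0"
  shows "trilinear T (x1,y1,1) (x2,y2,1) (x3,y3,1) = T 0 2 2 * (x1 + x2 + x3) + binary_polar T y1 y2 y3"
  using rank_one by (simp add: trilinear_symmetric_expand[OF sym] binary_polar_def algebra_simps)

lemma det3_binary_polar:
  "det3 (binary_polar T b c d, a, 1) (binary_polar T a c d, b, 1) (binary_polar T a b d, c, 1)
     = - (a - b) * (b - c) * (c - a) * (T 1 1 1 * d + T 1 1 2)"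
  unfolding det3_def binary_polar_def by simp algebra

lemma det3_shift:
  "k \<noteq> 0 \<Longrightarrow> k * det3 (S + x / k, y, 1) (S + x' / k, y', 1) (S + x'' / k, y'', 1)
     = det3 (x, y, 1) (x', y', 1) (x'', y'', 1)"
  unfolding det3_def by (simp add: field_simps)

text \<open>Points \<open>(x\<^sub>i, t\<^sub>i, 1)\<close> with \<open>k x\<^sub>i\<close> equal, up to a common shift, to the binary polar of the
  other three \<open>t\<^sub>j\<close>: any three of them satisfy the trilinear equation.\<close>
lemma has_polar_quadrilateral_rank_one_generic:
  assumes sym: "symmetric3 T"
    and rank_one: "T 0 0 0 = 0" "T 0 0 1 = 0" "T 0 0 2 = 0" "T 0 1 1 = 0" "T 0 1 2 = 0"
    and T022: "T 0 2 2 \<noteq> 0"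
    and distinct: "distinct [t1, t2, t3, t4]"
    and nonzero: "\<forall>t\<in>{t1, t2, t3, t4}. T 1 1 1 * t + T 1 1 2 \<noteq> 0"
  shows "has_polar_quadrilateral T"
proof -
  define k where "k = T 0 2 2"
  define Q1 where "Q1 = binary_polar T t2 t3 t4"
  define Q2 where "Q2 = binary_polar T t1 t3 t4"
  define Q3 where "Q3 = binary_polar T t1 t2 t4"
  define Q4 where "Q4 = binary_polar T t1 t2 t3"
  define S where "S = - (Q1 + Q2 + Q3 + Q4) / (3 * k)"
  define v1 where "v1 = (S + Q1 / k, t1, 1::complex)"
  define v2 where "v2 = (S + Q2 / k, t2, 1::complex)"
  define v3 where "v3 = (S + Q3 / k, t3, 1::complex)"
  define v4 where "v4 = (S + Q4 / k, t4, 1::complex)"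
  have k: "k \<noteq> 0" using T022 k_def by simp
  have tri: "trilinear T (x1,y1,1) (x2,y2,1) (x3,y3,1) = k * (x1 + x2 + x3) + binary_polar T y1 y2 y3"
    for x1 y1 x2 y2 x3 y3
    using trilinear_rank_one_affine[OF sym rank_one] k_def by simp
  have "trilinear T v1 v2 v3 = 0" "trilinear T v1 v2 v4 = 0" "trilinear T v1 v3 v4 = 0"
    "trilinear T v2 v3 v4 = 0"
    unfolding v1_def v2_def v3_def v4_def tri S_def using k
    by (simp_all add: field_simps Q1_def Q2_def Q3_def Q4_def)
  moreover have "k * det3 v1 v2 v3 = - (t1 - t2) * (t2 - t3) * (t3 - t1) * (T 1 1 1 * t4 + T 1 1 2)"
    unfolding v1_def v2_def v3_def det3_shift[OF k] Q1_def Q2_def Q3_def by (rule det3_binary_polar)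
  moreover have "k * det3 v1 v2 v4 = - (t1 - t2) * (t2 - t4) * (t4 - t1) * (T 1 1 1 * t3 + T 1 1 2)"
    unfolding v1_def v2_def v4_def det3_shift[OF k] Q1_def Q2_def Q4_def
    using det3_binary_polar[of T t2 t4 t3 t1] by (simp add: binary_polar_def ac_simps)
  moreover have "k * det3 v1 v3 v4 = - (t1 - t3) * (t3 - t4) * (t4 - t1) * (T 1 1 1 * t2 + T 1 1 2)"
    unfolding v1_def v3_def v4_def det3_shift[OF k] Q1_def Q3_def Q4_def
    using det3_binary_polar[of T t3 t4 t2 t1] by (simp add: binary_polar_def ac_simps)
  moreover have "k * det3 v2 v3 v4 = - (t2 - t3) * (t3 - t4) * (t4 - t2) * (T 1 1 1 * t1 + T 1 1 2)"
    unfolding v2_def v3_def v4_def det3_shift[OF k] Q2_def Q3_def Q4_def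
    using det3_binary_polar[of T t3 t4 t1 t2] by (simp add: binary_polar_def ac_simps)
  ultimately have "polar_quadrilateral T v1 v2 v3 v4"
    using distinct nonzero by (auto simp: polar_quadrilateral_def)
  then show ?thesis by blast
qed

lemma has_polar_quadrilateral_rank_one:
  assumes sym: "symmetric3 T"
    and rank_one: "T 0 0 0 = 0" "T 0 0 1 = 0" "T 0 0 2 = 0" "T 0 1 1 = 0" "T 0 1 2 = 0"
    and k: "T 0 2 2 \<noteq> 0"
  shows "has_polar_quadrilateral T"
proof (cases "T 1 1 1 = 0 \<and> T 1 1 2 = 0")
  case False
  define \<rho> where "\<rho> = (if T 1 1 1 = 0 then 0 else - T 1 1 2 / T 1 1 1)"
  have off_root: "T 1 1 1 * (\<rho> + c) + T 1 1 2 \<noteq> 0" if "c \<noteq> 0" for c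
    using False that by (cases "T 1 1 1 = 0") (auto simp: \<rho>_def field_simps)
  have "\<forall>t\<in>{\<rho> + 1, \<rho> + 2, \<rho> + 3, \<rho> + 4}. T 1 1 1 * t + T 1 1 2 \<noteq> 0"
    using off_root[of 1] off_root[of 2] off_root[of 3] off_root[of 4] by simp
  moreover have "distinct [\<rho> + 1, \<rho> + 2, \<rho> + 3, \<rho> + 4]" by simp
  ultimately show ?thesis
    using has_polar_quadrilateral_rank_one_generic[OF sym rank_one k] by blast
next
  case True
  text \<open>Now \<open>(\<mu>, 1, 0)\<close> is conjugate to every pair of lines, and a single trilinear condition
    remains for the other three.\<close>
  define \<mu> where "\<mu> = - T 1 2 2 / T 0 2 2"
  define \<sigma> where "\<sigma> = - (T 1 2 2 + T 2 2 2) / T 0 2 2"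
  have "finite {0, \<mu>, - \<mu>}" by simp
  then obtain d :: complex where d: "d \<notin> {0, \<mu>, - \<mu>}"
    using ex_new_if_finite[OF infinite_UNIV_char_0] by blast
  have "trilinear T (\<mu>,1,0) x y = 0" for x y
    using rank_one True k by (cases x, cases y) (simp add: trilinear_symmetric_expand[OF sym] \<mu>_def field_simps)
  moreover have "trilinear T (\<sigma>/3 + d, 0, 1) (\<sigma>/3, 1, 1) (\<sigma>/3 - d, 0, 1) = 0"
    using trilinear_rank_one_affine[OF sym rank_one] True k by (simp add: binary_polar_def \<sigma>_def field_simps)
  moreover have "d \<noteq> 0" "\<mu> \<noteq> d" "- \<mu> \<noteq> d" "\<mu> + d \<noteq> 0"
    using d by (auto simp: add_eq_0_iff)
  ultimately have "polar_quadrilateral T (\<mu>,1,0) (\<sigma>/3 + d, 0, 1) (\<sigma>/3, 1, 1) (\<sigma>/3 - d, 0, 1)"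
    by (simp add: polar_quadrilateral_def det3_def algebra_simps)
  then show ?thesis by blast
qed

lemma has_polar_quadrilateral_conjugate:
  assumes sym: "symmetric3 T" and conj: "T 0 0 1 = 0" "T 0 1 1 = 0" "T 0 1 2 = 0"
  shows "has_polar_quadrilateral T"
proof (cases "T 0 0 0 = 0 \<and> T 0 0 2 = 0 \<and> T 0 2 2 \<noteq> 0")
  case True
  then show ?thesis using has_polar_quadrilateral_rank_one[OF sym] conj by blast
next
  case nondeg0: False
  show ?thesis
  proof (cases "T 1 1 1 = 0 \<and> T 1 1 2 = 0 \<and> T 1 2 2 \<noteq> 0")
    case True
    have "has_polar_quadrilateral (pull_tensor T (0,1,0) (1,0,0) (0,0,1))"
      by (rule has_polar_quadrilateral_rank_one[OF symmetric3_pull_tensor[OF sym]])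
         (use True conj in \<open>simp_all add: pull_tensor_def basis_vec_def trilinear_symmetric_expand[OF sym]\<close>)
    then show ?thesis by (rule has_polar_quadrilateral_pull_tensor[rotated]) (simp add: det3_def)
  next
    case False
    then show ?thesis using has_polar_quadrilateral_conjugate_generic[OF sym conj nondeg0] by blast
  qed
qed

lemma singular_symmetric3_kernel:
  fixes n00 n01 n02 n11 n12 n22 :: complex
  assumes det: "det3 (n00, n01, n02) (n01, n11, n12) (n02, n12, n22) = 0"
    and not_node: "\<not> (n00 = 0 \<and> n01 = 0 \<and> n02 = 0 \<and> n11 * n22 - n12 * n12 \<noteq> 0)"
  shows "\<exists>w0 w1 w2. (w1 \<noteq> 0 \<or> w2 \<noteq> 0) \<and> n00 * w0 + n01 * w1 + n02 * w2 = 0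
          \<and> n01 * w0 + n11 * w1 + n12 * w2 = 0 \<and> n02 * w0 + n12 * w1 + n22 * w2 = 0"
proof -
  have det_expand: "n00 * (n11 * n22 - n12 * n12) - n01 * (n01 * n22 - n12 * n02)
      + n02 * (n01 * n12 - n11 * n02) = 0"
    using det by (simp add: det3_def)
  consider "n11 * n22 - n12 * n12 \<noteq> 0"
    | "n11 * n22 - n12 * n12 = 0" "n12 \<noteq> 0 \<or> n22 \<noteq> 0"
    | "n12 = 0" "n22 = 0" "n02 = 0"
    | "n12 = 0" "n22 = 0" "n02 \<noteq> 0"
    by force
  then show ?thesis
  proof cases
    case 1
    text \<open>A column of the adjugate matrix.\<close>
    define w1 where "w1 = n12 * n02 - n22 * n01"
    define w2 where "w2 = n12 * n01 - n11 * n02"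
    have "w1 \<noteq> 0 \<or> w2 \<noteq> 0"
    proof (rule ccontr)
      assume "\<not> (w1 \<noteq> 0 \<or> w2 \<noteq> 0)"
      then have "(n11 * n22 - n12 * n12) * n01 = 0" "(n11 * n22 - n12 * n12) * n02 = 0"
        unfolding w1_def w2_def by algebra+
      with 1 det_expand not_node show False by simp
    qed
    moreover have "n00 * (n11 * n22 - n12 * n12) + n01 * w1 + n02 * w2 = 0"
      using det_expand unfolding w1_def w2_def by algebra
    moreover have "n01 * (n11 * n22 - n12 * n12) + n11 * w1 + n12 * w2 = 0"
      "n02 * (n11 * n22 - n12 * n12) + n12 * w1 + n22 * w2 = 0"
      unfolding w1_def w2_def by algebra+
    ultimately show ?thesis by blast
  next
    case 2
    have "(n01 * n22 - n02 * n12)\<^sup>2 = 0"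
      using 2(1) det_expand unfolding power2_eq_square by algebra
    with 2 show ?thesis
      by (intro exI[of _ 0] exI[of _ n22] exI[of _ "- n12"]) (auto simp: algebra_simps)
  next
    case 3
    then show ?thesis by (intro exI[of _ 0] exI[of _ 0] exI[of _ 1]) simp
  next
    case 4
    with det_expand have "n11 = 0" by simp
    with 4 show ?thesis
      by (intro exI[of _ 0] exI[of _ n02] exI[of _ "- n01"]) (simp add: algebra_simps)
  qed
qed

text \<open>\<open>T(x, -, -)\<close> is the polar conic of \<open>x\<close> with respect to the cubic curve \<open>T(x, x, x) = 0\<close>;
  its determinant is, up to a constant, the Hessian of the cubic at \<open>x\<close>.\<close>
definition hessian_det :: "tensor3 \<Rightarrow> cvec3 \<Rightarrow> complex" where
  "hessian_det T x = det3
     (trilinear T x (1,0,0) (1,0,0), trilinear T x (1,0,0) (0,1,0), trilinear T x (1,0,0) (0,0,1))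
     (trilinear T x (0,1,0) (1,0,0), trilinear T x (0,1,0) (0,1,0), trilinear T x (0,1,0) (0,0,1))
     (trilinear T x (0,0,1) (1,0,0), trilinear T x (0,0,1) (0,1,0), trilinear T x (0,0,1) (0,0,1))"

lemma has_polar_quadrilateral_degenerate_conic:
  assumes sym: "symmetric3 T" and hess: "hessian_det T (1,0,0) = 0"
    and not_node: "\<not> (T 0 0 0 = 0 \<and> T 0 0 1 = 0 \<and> T 0 0 2 = 0 \<and> T 0 1 1 * T 0 2 2 - T 0 1 2 * T 0 1 2 \<noteq> 0)"
  shows "has_polar_quadrilateral T"
proof -
  have "det3 (T 0 0 0, T 0 0 1, T 0 0 2) (T 0 0 1, T 0 1 1, T 0 1 2) (T 0 0 2, T 0 1 2, T 0 2 2) = 0"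
    using hess by (simp add: hessian_det_def trilinear_symmetric_expand[OF sym])
  from singular_symmetric3_kernel[OF this not_node] obtain w0 w1 w2 where w: "w1 \<noteq> 0 \<or> w2 \<noteq> 0"
    "T 0 0 0 * w0 + T 0 0 1 * w1 + T 0 0 2 * w2 = 0"
    "T 0 0 1 * w0 + T 0 1 1 * w1 + T 0 1 2 * w2 = 0"
    "T 0 0 2 * w0 + T 0 1 2 * w1 + T 0 2 2 * w2 = 0" by blast
  define w where "w = (w0, w1, w2)"
  define m :: cvec3 where "m = (if w2 \<noteq> 0 then (0,1,0) else (0,0,1))"
  have conj: "trilinear T (1,0,0) w x = 0" for x
  proof -
    obtain x0 x1 x2 where x: "x = (x0, x1, x2)" by (cases x)
    have "trilinear T (1,0,0) w x = x0 * (T 0 0 0 * w0 + T 0 0 1 * w1 + T 0 0 2 * w2)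
        + x1 * (T 0 0 1 * w0 + T 0 1 1 * w1 + T 0 1 2 * w2) + x2 * (T 0 0 2 * w0 + T 0 1 2 * w1 + T 0 2 2 * w2)"
      by (simp add: x w_def trilinear_symmetric_expand[OF sym] algebra_simps)
    with w show ?thesis by simp
  qed
  have "has_polar_quadrilateral (pull_tensor T (1,0,0) w m)"
  proof (rule has_polar_quadrilateral_conjugate[OF symmetric3_pull_tensor[OF sym]])
    show "pull_tensor T (1,0,0) w m 0 0 1 = 0" "pull_tensor T (1,0,0) w m 0 1 1 = 0"
      "pull_tensor T (1,0,0) w m 0 1 2 = 0"
      using conj trilinear_swap23[OF sym] by (simp_all add: pull_tensor_def basis_vec_def) metis
  qed
  moreover have "det3 (1,0,0) w m \<noteq> 0"
    using w(1) by (auto simp: m_def w_def det3_def)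
  ultimately show ?thesis using has_polar_quadrilateral_pull_tensor by blast
qed

lemma lincomb3_units: "v = lincomb3 (fst v) (1,0,0) (fst (snd v)) (0,1,0) (snd (snd v)) (0,0,1)"
  by (cases v) (simp add: lincomb3_def)

lemma det3_gram_trilinear:
  "det3 (trilinear T x m0 m0, trilinear T x m0 m1, trilinear T x m0 m2)
        (trilinear T x m1 m0, trilinear T x m1 m1, trilinear T x m1 m2)
        (trilinear T x m2 m0, trilinear T x m2 m1, trilinear T x m2 m2)
   = (det3 m0 m1 m2)\<^sup>2 * hessian_det T x"
proof -
  define b where "b = (\<lambda>u w. trilinear T x u w)"
  define e0 where "e0 = ((1,0,0) :: cvec3)"
  define e1 where "e1 = ((0,1,0) :: cvec3)"
  define e2 where "e2 = ((0,0,1) :: cvec3)"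
  define S0 where "S0 = (b e0 m0, b e0 m1, b e0 m2)"
  define S1 where "S1 = (b e1 m0, b e1 m1, b e1 m2)"
  define S2 where "S2 = (b e2 m0, b e2 m1, b e2 m2)"
  have row: "(b u m0, b u m1, b u m2) = basis_comb S0 S1 S2 u" for u
  proof -
    have "b u w = fst u * b e0 w + fst (snd u) * b e1 w + snd (snd u) * b e2 w" for w
      unfolding b_def e0_def e1_def e2_def by (subst lincomb3_units[of u]) (simp only: trilinear_lincomb2)
    then show ?thesis by (simp add: basis_comb_def lincomb3_def S0_def S1_def S2_def)
  qed
  define W0 where "W0 = (b e0 e0, b e1 e0, b e2 e0)"
  define W1 where "W1 = (b e0 e1, b e1 e1, b e2 e1)"
  define W2 where "W2 = (b e0 e2, b e1 e2, b e2 e2)"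
  have col: "(b e0 w, b e1 w, b e2 w) = basis_comb W0 W1 W2 w" for w
  proof -
    have "b u w = fst w * b u e0 + fst (snd w) * b u e1 + snd (snd w) * b u e2" for u
      unfolding b_def e0_def e1_def e2_def by (subst lincomb3_units[of w]) (simp only: trilinear_lincomb3)
    then show ?thesis by (simp add: basis_comb_def lincomb3_def W0_def W1_def W2_def)
  qed
  have "det3 (b m0 m0, b m0 m1, b m0 m2) (b m1 m0, b m1 m1, b m1 m2) (b m2 m0, b m2 m1, b m2 m2)
      = det3 S0 S1 S2 * det3 m0 m1 m2" unfolding row det3_basis_comb ..
  also have "det3 S0 S1 S2 = det3 (b e0 m0, b e1 m0, b e2 m0) (b e0 m1, b e1 m1, b e2 m1) (b e0 m2, b e1 m2, b e2 m2)"
    unfolding S0_def S1_def S2_def by (rule det3_transpose)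
  also have "\<dots> = det3 W0 W1 W2 * det3 m0 m1 m2" unfolding col det3_basis_comb ..
  also have "det3 W0 W1 W2 = det3 (b e0 e0, b e0 e1, b e0 e2) (b e1 e0, b e1 e1, b e1 e2) (b e2 e0, b e2 e1, b e2 e2)"
    unfolding W0_def W1_def W2_def by (rule det3_transpose)
  finally show ?thesis
    unfolding b_def e0_def e1_def e2_def hessian_det_def by (simp add: power2_eq_square mult_ac)
qed

lemma hessian_det_pull_tensor:
  "hessian_det (pull_tensor T m0 m1 m2) (1,0,0) = (det3 m0 m1 m2)\<^sup>2 * hessian_det T m0"
proof -
  have "hessian_det (pull_tensor T m0 m1 m2) (1,0,0) =
      det3 (trilinear T m0 m0 m0, trilinear T m0 m0 m1, trilinear T m0 m0 m2)
           (trilinear T m0 m1 m0, trilinear T m0 m1 m1, trilinear T m0 m1 m2)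
           (trilinear T m0 m2 m0, trilinear T m0 m2 m1, trilinear T m0 m2 m2)"
    by (simp add: hessian_det_def trilinear_expand pull_tensor_def basis_vec_def)
  then show ?thesis by (simp add: det3_gram_trilinear)
qed

lemma det3_pencil:
  "det3 (a0 + s * b0, a1 + s * b1, a2 + s * b2) (c0 + s * d0, c1 + s * d1, c2 + s * d2)
        (e0 + s * f0, e1 + s * f1, e2 + s * f2)
   = det3 (a0,a1,a2) (c0,c1,c2) (e0,e1,e2)
     + (det3 (b0,b1,b2) (c0,c1,c2) (e0,e1,e2) + det3 (a0,a1,a2) (d0,d1,d2) (e0,e1,e2)
        + det3 (a0,a1,a2) (c0,c1,c2) (f0,f1,f2)) * s
     + (det3 (a0,a1,a2) (d0,d1,d2) (f0,f1,f2) + det3 (b0,b1,b2) (c0,c1,c2) (f0,f1,f2)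
        + det3 (b0,b1,b2) (d0,d1,d2) (e0,e1,e2)) * s\<^sup>2
     + det3 (b0,b1,b2) (d0,d1,d2) (f0,f1,f2) * s ^ 3"
  unfolding det3_def by (simp add: power2_eq_square power3_eq_cube) algebra

lemma hessian_det_on_line:
  "\<exists>c1 c2. \<forall>s. hessian_det T (1, s, 0) =
     hessian_det T (1,0,0) + c1 * s + c2 * s\<^sup>2 + hessian_det T (0,1,0) * s ^ 3"
proof -
  define A where "A = trilinear T (1,0,0)"
  define B where "B = trilinear T (0,1,0)"
  define row :: "(cvec3 \<Rightarrow> cvec3 \<Rightarrow> complex) \<Rightarrow> cvec3 \<Rightarrow> cvec3"
    where "row F u = (F u (1,0,0), F u (0,1,0), F u (0,0,1))" for F u
  define C1 where "C1 = det3 (row B (1,0,0)) (row A (0,1,0)) (row A (0,0,1))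
    + det3 (row A (1,0,0)) (row B (0,1,0)) (row A (0,0,1)) + det3 (row A (1,0,0)) (row A (0,1,0)) (row B (0,0,1))"
  define C2 where "C2 = det3 (row A (1,0,0)) (row B (0,1,0)) (row B (0,0,1))
    + det3 (row B (1,0,0)) (row A (0,1,0)) (row B (0,0,1)) + det3 (row B (1,0,0)) (row B (0,1,0)) (row A (0,0,1))"
  have line: "trilinear T (1, s, 0) u w = A u w + s * B u w" for s u w
  proof -
    have "(1, s, 0) = lincomb3 1 (1,0,0) s (0,1,0) 0 (0,0,1)" by (simp add: lincomb3_def)
    then show ?thesis unfolding A_def B_def by (simp add: trilinear_lincomb1)
  qed
  have "hessian_det T (1, s, 0) = hessian_det T (1,0,0) + C1 * s + C2 * s\<^sup>2 + hessian_det T (0,1,0) * s ^ 3"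
    for s
  proof -
    have "hessian_det T (1, s, 0) = det3
       (A (1,0,0) (1,0,0) + s * B (1,0,0) (1,0,0), A (1,0,0) (0,1,0) + s * B (1,0,0) (0,1,0),
        A (1,0,0) (0,0,1) + s * B (1,0,0) (0,0,1))
       (A (0,1,0) (1,0,0) + s * B (0,1,0) (1,0,0), A (0,1,0) (0,1,0) + s * B (0,1,0) (0,1,0),
        A (0,1,0) (0,0,1) + s * B (0,1,0) (0,0,1))
       (A (0,0,1) (1,0,0) + s * B (0,0,1) (1,0,0), A (0,0,1) (0,1,0) + s * B (0,0,1) (0,1,0),
        A (0,0,1) (0,0,1) + s * B (0,0,1) (0,0,1))"
      by (simp only: hessian_det_def line)
    moreover have "hessian_det T (1,0,0) = det3 (row A (1,0,0)) (row A (0,1,0)) (row A (0,0,1))"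
      "hessian_det T (0,1,0) = det3 (row B (1,0,0)) (row B (0,1,0)) (row B (0,0,1))"
      by (simp_all only: hessian_det_def row_def A_def B_def)
    ultimately show ?thesis
      by (simp only: det3_pencil C1_def C2_def row_def)
  qed
  then show ?thesis by blast
qed

lemma cubic_root:
  fixes c0 c1 c2 c3 :: complex
  assumes "c3 \<noteq> 0"
  shows "\<exists>s. c0 + c1 * s + c2 * s\<^sup>2 + c3 * s ^ 3 = 0"
proof -
  have "degree [:c0, c1, c2, c3:] = 3" using assms by simp
  then have "\<not> constant (poly [:c0, c1, c2, c3:])" by (subst constant_degree) simp
  then obtain z where "poly [:c0, c1, c2, c3:] z = 0" using fundamental_theorem_of_algebra by blast
  then show ?thesis by (auto simp: algebra_simps power2_eq_square power3_eq_cube)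
qed

lemma hessian_det_has_zero: "\<exists>x. x \<noteq> (0,0,0) \<and> hessian_det T x = 0"
proof (cases "hessian_det T (0,1,0) = 0")
  case True
  then show ?thesis by (intro exI[of _ "(0,1,0)"]) simp
next
  case False
  obtain c1 c2 where line: "\<forall>s. hessian_det T (1, s, 0) =
      hessian_det T (1,0,0) + c1 * s + c2 * s\<^sup>2 + hessian_det T (0,1,0) * s ^ 3"
    using hessian_det_on_line by blast
  obtain s where "hessian_det T (1,0,0) + c1 * s + c2 * s\<^sup>2 + hessian_det T (0,1,0) * s ^ 3 = 0"
    using cubic_root[OF False] by blast
  then have "hessian_det T (1, s, 0) = 0" by (simp add: line[rule_format, of s])
  then show ?thesis by (intro exI[of _ "(1, s, 0)"]) simp
qed

lemma extend_to_basis: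
  assumes "x \<noteq> (0,0,0)"
  shows "\<exists>m1 m2. det3 x m1 m2 \<noteq> 0"
proof -
  obtain x0 x1 x2 where x: "x = (x0, x1, x2)" by (cases x)
  consider "x0 \<noteq> 0" | "x1 \<noteq> 0" | "x2 \<noteq> 0" using assms x by auto
  then show ?thesis
  proof cases
    case 1
    then have "det3 x (0,1,0) (0,0,1) \<noteq> 0" by (simp add: x det3_def)
    then show ?thesis by blast
  next
    case 2
    then have "det3 x (0,0,1) (1,0,0) \<noteq> 0" by (simp add: x det3_def)
    then show ?thesis by blast
  next
    case 3
    then have "det3 x (1,0,0) (0,1,0) \<noteq> 0" by (simp add: x det3_def)
    then show ?thesis by blast
  qed
qed

text \<open>Here \<open>e\<^sub>0\<close> is a singular point of the cubic and the kernel of its polar conic is \<open>e\<^sub>0\<close>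
  alone; we move to another point of the Hessian curve, found on a line through \<open>e\<^sub>0\<close>,
  along which the Hessian is affine with nonzero slope.\<close>
lemma has_polar_quadrilateral_singular_point:
  assumes sym: "symmetric3 T" and singular: "T 0 0 0 = 0" "T 0 0 1 = 0" "T 0 0 2 = 0"
    and node: "T 0 1 1 * T 0 2 2 - T 0 1 2 * T 0 1 2 \<noteq> 0"
  shows "has_polar_quadrilateral T"
proof -
  define q where "q = (\<lambda>v1 v2. T 0 1 1 * v1 * v1 + 2 * T 0 1 2 * v1 * v2 + T 0 2 2 * v2 * v2)"
  obtain v1 v2 where qv: "q v1 v2 \<noteq> 0"
  proof (cases "T 0 1 1 \<noteq> 0 \<or> T 0 2 2 \<noteq> 0")
    case True
    then show ?thesis using that[of 1 0] that[of 0 1] by (auto simp: q_def)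
  next
    case False
    then show ?thesis using that[of 1 1] node by (simp add: q_def)
  qed
  define dd where "dd = T 0 1 1 * T 0 2 2 - T 0 1 2 * T 0 1 2"
  define b1 where "b1 = T 0 1 1 * v1 + T 0 1 2 * v2"
  define b2 where "b2 = T 0 1 2 * v1 + T 0 2 2 * v2"
  define C11 where "C11 = v1 * T 1 1 1 + v2 * T 1 1 2"
  define C12 where "C12 = v1 * T 1 1 2 + v2 * T 1 2 2"
  define C22 where "C22 = v1 * T 1 2 2 + v2 * T 2 2 2"
  define g where "g = b1 * b1 * C22 - 2 * b1 * b2 * C12 + b2 * b2 * C11"
  have hessian_affine: "hessian_det T (v0, v1, v2) = - (v0 * dd * q v1 v2 + g)" for v0
    unfolding hessian_det_def
    by (simp add: trilinear_symmetric_expand[OF sym] singular singular[unfolded One_nat_def] det3_def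
        q_def dd_def g_def b1_def b2_def C11_def C12_def C22_def) algebra
  define v0 where "v0 = - g / (dd * q v1 v2)"
  have "dd \<noteq> 0" using node dd_def by simp
  then have hess: "hessian_det T (v0, v1, v2) = 0"
    unfolding hessian_affine v0_def using qv by (simp add: field_simps)
  have vv: "trilinear T (v0,v1,v2) (v0,v1,v2) (1,0,0) = q v1 v2"
    using singular by (simp add: trilinear_symmetric_expand[OF sym] q_def algebra_simps)
  define m :: cvec3 where "m = (if v2 \<noteq> 0 then (0,1,0) else (0,0,1))"
  have "v2 = 0 \<Longrightarrow> v1 \<noteq> 0" using qv by (auto simp: q_def)
  then have det: "det3 (v0,v1,v2) (1,0,0) m \<noteq> 0"
    by (auto simp: m_def det3_def)
  have "has_polar_quadrilateral (pull_tensor T (v0,v1,v2) (1,0,0) m)"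
  proof (rule has_polar_quadrilateral_degenerate_conic[OF symmetric3_pull_tensor[OF sym]])
    show "hessian_det (pull_tensor T (v0,v1,v2) (1,0,0) m) (1,0,0) = 0"
      unfolding hessian_det_pull_tensor hess by simp
    have "pull_tensor T (v0,v1,v2) (1,0,0) m 0 0 1 = q v1 v2"
      by (simp add: pull_tensor_def basis_vec_def vv)
    with qv show "\<not> (pull_tensor T (v0,v1,v2) (1,0,0) m 0 0 0 = 0 \<and> pull_tensor T (v0,v1,v2) (1,0,0) m 0 0 1 = 0
        \<and> pull_tensor T (v0,v1,v2) (1,0,0) m 0 0 2 = 0 \<and> pull_tensor T (v0,v1,v2) (1,0,0) m 0 1 1 *
        pull_tensor T (v0,v1,v2) (1,0,0) m 0 2 2 - pull_tensor T (v0,v1,v2) (1,0,0) m 0 1 2 *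
        pull_tensor T (v0,v1,v2) (1,0,0) m 0 1 2 \<noteq> 0)"
      by simp
  qed
  then show ?thesis using has_polar_quadrilateral_pull_tensor det by blast
qed

lemma symmetric3_has_polar_quadrilateral:
  assumes sym: "symmetric3 T"
  shows "has_polar_quadrilateral T"
proof -
  obtain x where x: "x \<noteq> (0,0,0)" "hessian_det T x = 0"
    using hessian_det_has_zero by blast
  then obtain m1 m2 where det: "det3 x m1 m2 \<noteq> 0"
    using extend_to_basis by blast
  define T' where "T' = pull_tensor T x m1 m2"
  have sym': "symmetric3 T'"
    unfolding T'_def by (rule symmetric3_pull_tensor[OF sym])
  have "hessian_det T' (1,0,0) = 0"
    by (simp add: T'_def hessian_det_pull_tensor x(2))
  then have "has_polar_quadrilateral T'"
    using has_polar_quadrilateral_singular_point[OF sym'] has_polar_quadrilateral_degenerate_conic[OF sym']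
    by blast
  then show ?thesis
    using has_polar_quadrilateral_pull_tensor det T'_def by blast
qed

section \<open>The star configuration of a polar quadrilateral\<close>

definition star_pair :: "nat \<Rightarrow> nat \<times> nat" where
  "star_pair q = [(0,1), (0,2), (1,2), (0,3), (1,3), (2,3)] ! q"

definition star_vertex :: "(nat \<Rightarrow> cvec3) \<Rightarrow> nat \<Rightarrow> cvec3" where
  "star_vertex l q = cross (l (fst (star_pair q))) (l (snd (star_pair q)))"

lemma det3_nonzero_quadrilateral:
  assumes "det3 l0 l1 l2 \<noteq> 0" "det3 l0 l1 l3 \<noteq> 0" "det3 l0 l2 l3 \<noteq> 0" "det3 l1 l2 l3 \<noteq> 0"
    and "i < 4" "j < 4" "k < 4" "i \<noteq> j" "i \<noteq> k" "j \<noteq> k"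
  shows "det3 ([l0, l1, l2, l3] ! i) ([l0, l1, l2, l3] ! j) ([l0, l1, l2, l3] ! k) \<noteq> 0"
proof -
  have perms: "det3 u w v \<noteq> 0 \<and> det3 v u w \<noteq> 0 \<and> det3 v w u \<noteq> 0 \<and> det3 w u v \<noteq> 0 \<and> det3 w v u \<noteq> 0"
    if "det3 u v w \<noteq> 0" for u v w
    using that by (metis det3_swap12 det3_swap23 neg_equal_0_iff_equal)
  have "i \<in> {0,1,2,3}" "j \<in> {0,1,2,3}" "k \<in> {0,1,2,3}"
    using assms(5-7) by auto
  then show ?thesis
    using assms(1-4) perms[OF assms(1)] perms[OF assms(2)] perms[OF assms(3)] perms[OF assms(4)] assms(8-10)
    by auto
qed

lemma star_forms4_quadrilateral:
  assumes "det3 l0 l1 l2 \<noteq> 0" "det3 l0 l1 l3 \<noteq> 0" "det3 l0 l2 l3 \<noteq> 0" "det3 l1 l2 l3 \<noteq> 0"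
  shows "star_forms4 ((!) [l0, l1, l2, l3])"
  unfolding star_forms4_def using det3_nonzero_quadrilateral[OF assms] lin_indep3_if_det3 by blast

lemma star_vertex_in_star_points4:
  assumes "det3 l0 l1 l2 \<noteq> 0" "det3 l0 l1 l3 \<noteq> 0" "det3 l0 l2 l3 \<noteq> 0" "det3 l1 l2 l3 \<noteq> 0"
    and "q < 6"
  shows "star_vertex ((!) [l0, l1, l2, l3]) q \<in> star_points4 ((!) [l0, l1, l2, l3])"
proof -
  define l where "l = (!) [l0, l1, l2, l3]"
  define i where "i = fst (star_pair q)"
  define j where "j = snd (star_pair q)"
  define k :: nat where "k = (if i = 0 then (if j = 1 then 2 else 1) else 0)"
  have "q \<in> {0,1,2,3,4,5}" using \<open>q < 6\<close> by auto
  then have ij: "i < j" "j < 4" by (auto simp: i_def j_def star_pair_def)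
  then have "k < 4" "k \<noteq> i" "k \<noteq> j" by (auto simp: k_def)
  with ij have "lin_eval (star_vertex l q) (l k) \<noteq> 0"
    using det3_nonzero_quadrilateral[OF assms(1-4), of i j k]
    by (simp add: star_vertex_def lin_eval_cross l_def i_def j_def)
  then have "star_vertex l q \<noteq> (0,0,0)" by (auto simp: lin_eval_def)
  moreover have "lin_eval (l i) (star_vertex l q) = 0" "lin_eval (l j) (star_vertex l q) = 0"
    by (simp_all add: star_vertex_def lin_eval_cross_left lin_eval_cross_right i_def j_def)
  ultimately show ?thesis
    using ij unfolding star_points4_def l_def by blast
qed

text \<open>Coordinates of the six star vertices on the basis dual to \<open>L\<^sub>0, L\<^sub>1, L\<^sub>2\<close> when
  \<open>L\<^sub>3 = L\<^sub>0 + L\<^sub>1 + L\<^sub>2\<close>, up to the factor \<open>det(L\<^sub>0, L\<^sub>1, L\<^sub>2)\<close>.\<close>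
definition star_coords :: "nat \<Rightarrow> cvec3" where
  "star_coords q = [(0,0,1), (0,-1,0), (1,0,0), (0,-1,1), (1,0,-1), (-1,1,0)] ! q"

lemma lin_eval_star_vertex:
  assumes "q < 6" "a < 3"
  shows "lin_eval (star_vertex ((!) [L0, L1, L2, lincomb3 1 L0 1 L1 1 L2]) q) (basis_vec L0 L1 L2 a)
         = det3 L0 L1 L2 * coord (star_coords q) a"
proof -
  have "q \<in> {0,1,2,3,4,5}" "a \<in> {0,1,2}" using assms by auto
  then show ?thesis
    by (auto simp: star_vertex_def star_pair_def star_coords_def basis_vec_def coord_def
        lin_eval_cross det3_def lincomb3_def algebra_simps)
qed

lemma lessThan_6: "{..<(6::nat)} = {0,1,2,3,4,5}"
  by auto

text \<open>Four linear conditions cut out a 6-dimensional space of symmetric tensors, and the cubes of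
  the six star vertices lie in it.\<close>
lemma normalized_tensor_decomposition:
  assumes sym: "symmetric3 \<Psi>"
    and c: "\<Psi> 0 1 2 = 0" "\<Psi> 0 0 1 + \<Psi> 0 1 1 = 0" "\<Psi> 0 0 2 + \<Psi> 0 2 2 = 0" "\<Psi> 1 1 2 + \<Psi> 1 2 2 = 0"
  shows "\<exists>w. \<forall>a b c. a < 3 \<longrightarrow> b < 3 \<longrightarrow> c < 3 \<longrightarrow>
    \<Psi> a b c = (\<Sum>q<6. w q * coord (star_coords q) a * coord (star_coords q) b * coord (star_coords q) c)"
proof -
  define w where "w = (\<lambda>q. [\<Psi> 2 2 2 - \<Psi> 1 1 2 - \<Psi> 0 0 2, - \<Psi> 1 1 1 - \<Psi> 1 1 2 + \<Psi> 0 0 1,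
      \<Psi> 0 0 0 + \<Psi> 0 0 2 + \<Psi> 0 0 1, \<Psi> 1 1 2, - \<Psi> 0 0 2, \<Psi> 0 0 1] ! q)"
  note s = symmetric3_eqs[OF sym]
  have c': "\<Psi> 0 1 1 = - \<Psi> 0 0 1" "\<Psi> 0 2 2 = - \<Psi> 0 0 2" "\<Psi> 1 2 2 = - \<Psi> 1 1 2"
    using c by (simp_all add: eq_neg_iff_add_eq_0 add.commute)
  have "\<Psi> a b c = (\<Sum>q<6. w q * coord (star_coords q) a * coord (star_coords q) b * coord (star_coords q) c)"
    if "a < 3" "b < 3" "c < 3" for a b c
  proof -
    have "a \<in> {0,1,2}" "b \<in> {0,1,2}" "c \<in> {0,1,2}" using that by auto
    then show ?thesis
      using c c' c[unfolded One_nat_def] c'[unfolded One_nat_def]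
      by (auto simp: lessThan_6 w_def star_coords_def coord_def s s[unfolded One_nat_def] algebra_simps)
  qed
  then show ?thesis by blast
qed

lemma polar_quadrilateral_decomposition:
  assumes sym: "symmetric3 T" and quad: "polar_quadrilateral T L0 L1 L2 (lincomb3 1 L0 1 L1 1 L2)"
  defines "P \<equiv> star_vertex ((!) [L0, L1, L2, lincomb3 1 L0 1 L1 1 L2])"
  shows "\<exists>c. \<forall>i j k. i < 3 \<longrightarrow> j < 3 \<longrightarrow> k < 3 \<longrightarrow>
    T i j k = (\<Sum>q<6. c q * coord (P q) i * coord (P q) j * coord (P q) k)"
proof -
  define D where "D = det3 L0 L1 L2"
  have "D \<noteq> 0" using quad by (simp add: D_def polar_quadrilateral_def)
  define \<Psi> where "\<Psi> = pull_tensor T L0 L1 L2"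
  have sym': "symmetric3 \<Psi>"
    unfolding \<Psi>_def by (rule symmetric3_pull_tensor[OF sym])
  note s = symmetric3_eqs[OF sym']
  have "trilinear T L0 L1 L2 = \<Psi> 0 1 2"
    "trilinear T L0 L1 (lincomb3 1 L0 1 L1 1 L2) = \<Psi> 0 1 0 + \<Psi> 0 1 1 + \<Psi> 0 1 2"
    "trilinear T L0 L2 (lincomb3 1 L0 1 L1 1 L2) = \<Psi> 0 2 0 + \<Psi> 0 2 1 + \<Psi> 0 2 2"
    "trilinear T L1 L2 (lincomb3 1 L0 1 L1 1 L2) = \<Psi> 1 2 0 + \<Psi> 1 2 1 + \<Psi> 1 2 2"
    by (simp_all add: \<Psi>_def pull_tensor_def basis_vec_def trilinear_lincomb3)
  with quad have "\<Psi> 0 1 2 = 0" "\<Psi> 0 0 1 + \<Psi> 0 1 1 + \<Psi> 0 1 2 = 0"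
    "\<Psi> 0 0 2 + \<Psi> 0 1 2 + \<Psi> 0 2 2 = 0" "\<Psi> 0 1 2 + \<Psi> 1 1 2 + \<Psi> 1 2 2 = 0"
    unfolding polar_quadrilateral_def s by auto
  then have "\<Psi> 0 1 2 = 0" "\<Psi> 0 0 1 + \<Psi> 0 1 1 = 0" "\<Psi> 0 0 2 + \<Psi> 0 2 2 = 0" "\<Psi> 1 1 2 + \<Psi> 1 2 2 = 0"
    by simp_all
  then obtain w where w: "\<And>a b c. a < 3 \<Longrightarrow> b < 3 \<Longrightarrow> c < 3 \<Longrightarrow>
      \<Psi> a b c = (\<Sum>q<6. w q * coord (star_coords q) a * coord (star_coords q) b * coord (star_coords q) c)"
    using normalized_tensor_decomposition[OF sym'] by blast
  define R where "R = (\<lambda>i j k. \<Sum>q<6. w q / D ^ 3 * coord (P q) i * coord (P q) j * coord (P q) k)"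
  have "T i j k = R i j k" if "i < 3" "j < 3" "k < 3" for i j k
  proof (rule tensor_eq_if_pull_tensor_eq[OF \<open>D \<noteq> 0\<close>[unfolded D_def] _ that])
    fix a b c :: nat
    assume abc: "a < 3" "b < 3" "c < 3"
    have "pull_tensor R L0 L1 L2 a b c = (\<Sum>q<6. w q / D ^ 3 * lin_eval (P q) (basis_vec L0 L1 L2 a)
        * lin_eval (P q) (basis_vec L0 L1 L2 b) * lin_eval (P q) (basis_vec L0 L1 L2 c))"
      unfolding R_def pull_tensor_def by (rule trilinear_sum_rank_one)
    also have "\<dots> = (\<Sum>q<6. w q * coord (star_coords q) a * coord (star_coords q) b * coord (star_coords q) c)"
      by (rule sum.cong) (use abc \<open>D \<noteq> 0\<close> in \<open>simp_all add: P_def lin_eval_star_vertex D_def power3_eq_cube\<close>)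
    also have "\<dots> = pull_tensor T L0 L1 L2 a b c"
      using w[OF abc] by (simp add: \<Psi>_def)
    finally show "pull_tensor T L0 L1 L2 a b c = pull_tensor R L0 L1 L2 a b c" by simp
  qed
  then show ?thesis
    unfolding R_def by (intro exI[of _ "\<lambda>q. w q / D ^ 3"] allI impI) simp
qed

theorem theorem4p5:
  fixes F :: cpoly3
  assumes "is_form3 3 F"
  shows "\<exists>l. star_forms4 l \<and> ideal_of_points (star_points4 l) \<subseteq> perp F"
proof -
  obtain l0 l1 l2 l3 where "polar_quadrilateral (polar_tensor F) l0 l1 l2 l3"
    using symmetric3_has_polar_quadrilateral[OF symmetric3_polar_tensor] by blast
  then obtain L0 L1 L2 where quad: "polar_quadrilateral (polar_tensor F) L0 L1 L2 (lincomb3 1 L0 1 L1 1 L2)"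
    using polar_quadrilateral_normalize by blast
  define l where "l = (!) [L0, L1, L2, lincomb3 1 L0 1 L1 1 L2]"
  obtain c where "\<forall>i j k. i < 3 \<longrightarrow> j < 3 \<longrightarrow> k < 3 \<longrightarrow> polar_tensor F i j k =
      (\<Sum>q<6. c q * coord (star_vertex l q) i * coord (star_vertex l q) j * coord (star_vertex l q) k)"
    using polar_quadrilateral_decomposition[OF symmetric3_polar_tensor quad] unfolding l_def by blast
  then have F: "F e = (\<Sum>q<6. c q * cube_poly (star_vertex l q) e)" for e
    using cubic_form_eq_sum_of_cubes[OF assms] by blast
  have dets: "det3 L0 L1 L2 \<noteq> 0" "det3 L0 L1 (lincomb3 1 L0 1 L1 1 L2) \<noteq> 0"
    "det3 L0 L2 (lincomb3 1 L0 1 L1 1 L2) \<noteq> 0" "det3 L1 L2 (lincomb3 1 L0 1 L1 1 L2) \<noteq> 0"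
    using quad by (simp_all add: polar_quadrilateral_def)
  have "star_forms4 l"
    unfolding l_def by (rule star_forms4_quadrilateral[OF dets])
  moreover have "ideal_of_points (star_points4 l) \<subseteq> perp F"
    using ideal_of_points_subset_perp[OF _ F] star_vertex_in_star_points4[OF dets] l_def by blast
  ultimately show ?thesis by blast
qed

end
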